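(* Let $\alpha\in(1,2)$, $\sigma:\mathbb{R}\to(0,\infty)$ continuous, and let $Y$ be the time-changed symmetric $\alpha$-stable process described in the context. If $$\delta_+:=\sup_{x>0}x^{\alpha-1}\int_x^\infty\sigma(z)^{-\alpha}dz<\infty,$$ then for every $x>0$, $$\mathrm{II}^+(\varphi)(x)\le\frac{4}{\Gamma(\alpha/2)^2(\alpha-1)}\delta_+,$$ where $\varphi(x)=x^{(\alpha-1)/2}$.
   Context: $X$ is the symmetric $\alpha$-stable process on $\mathbb{R}$ (generator $-(-\Delta)^{\alpha/2}$), and $Y_t=X_{\zeta_t}$ with $\zeta_t=\inf\{s>0:\int_0^s\sigma(X_u)^{-\alpha}du>t\}$. For a positive function $f$ on $(0,\infty)$ define $$\mathrm{II}^+(f)(x)=\frac{1}{\Gamma(\alpha/2)^2f(x)}\int_0^xz^{\alpha-2}\left(\int_z^\infty f(y)\sigma(y)^{-\alpha}dy\right)dz,\quad x>0$$ (an upper bound for $U^{(0,\infty)}f(x)/f(x)$, where $U^{(0,\infty)}f(x)=\mathbb{E}_x\int_0^{\tau_{(0,\infty)}}f(Y_t)dt$ and $\tau_{(0,\infty)}$ is the exit time of $Y$ from $(0,\infty)$). *)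

theory Defs
  imports "HOL-Analysis.Analysis"
begin

text \<open>II^+(f)(x), as an extended nonnegative real (all integrands are nonnegative).\<close>
definition II_plus :: "real \<Rightarrow> (real \<Rightarrow> real) \<Rightarrow> (real \<Rightarrow> real) \<Rightarrow> real \<Rightarrow> ennreal" where
  "II_plus \<alpha> \<sigma> f x =
     (\<integral>\<^sup>+ z\<in>{0<..<x}. ennreal (z powr (\<alpha> - 2)) *
        (\<integral>\<^sup>+ y\<in>{z<..}. ennreal (f y * \<sigma> y powr (-\<alpha>)) \<partial>lborel) \<partial>lborel)
     / ennreal (Gamma (\<alpha> / 2) ^ 2 * f x)"

definition delta_plus :: "real \<Rightarrow> (real \<Rightarrow> real) \<Rightarrow> ennreal" where
  "delta_plus \<alpha> \<sigma> = (SUP x\<in>{0<..}. ennreal (x powr (\<alpha> - 1)) *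
        (\<integral>\<^sup>+ z\<in>{x<..}. ennreal (\<sigma> z powr (-\<alpha>)) \<partial>lborel))"

end

theory Submission
  imports Defs
begin

(* Let beta = (alpha - 1)/2 and D = delta_plus.  By definition of D the tails satisfy
   int_t^oo sigma^(-alpha) <= D t^(1 - alpha).  Writing y^beta = z^beta + int_z^y beta t^(beta - 1) dt
   and exchanging the order of integration,
     int_z^oo y^beta sigma(y)^(-alpha) dy <= z^beta D z^(1 - alpha) + int_z^oo beta t^(beta - 1) D t^(1 - alpha) dt
                                          = 2 D z^(-beta),
   since 2 beta = alpha - 1.  Integrating against z^(alpha - 2) over (0, x) gives 4 D x^beta / (alpha - 1),
   and the weight x^beta cancels against the normalisation by phi(x) in II^+. *)

lemma set_nn_integral_powr_derivative_Icc:
  fixes a b \<beta> :: real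
  assumes "0 < a" "a \<le> b" "0 < \<beta>"
  shows "(\<integral>\<^sup>+ t\<in>{a..b}. ennreal (\<beta> * t powr (\<beta> - 1)) \<partial>lborel) = ennreal (b powr \<beta> - a powr \<beta>)"
proof (rule nn_integral_FTC_Icc)
  fix t assume "t \<in> {a..b}"
  then have "0 < t" using assms by auto
  then show "((\<lambda>t. t powr \<beta>) has_real_derivative \<beta> * t powr (\<beta> - 1)) (at t)"
    by (auto intro!: derivative_eq_intros)
  show "0 \<le> \<beta> * t powr (\<beta> - 1)" using assms by simp
qed (use assms in auto)

lemma set_nn_integral_powr_Icc_0:
  fixes c k p :: real
  assumes "-1 < p" "0 \<le> c" "0 \<le> k"
  shows "(\<integral>\<^sup>+ t\<in>{0..c}. ennreal (k * t powr p) \<partial>lborel) = ennreal (k * (c powr (p + 1) / (p + 1)))"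
  using assms
  by (intro nn_integral_has_integral_lebesgue' has_integral_mult_right has_integral_powr_from_0) auto

lemma set_nn_integral_powr_Ici:
  fixes a k p :: real
  assumes "p < -1" "0 < a" "0 \<le> k"
  shows "(\<integral>\<^sup>+ t\<in>{a..}. ennreal (k * t powr p) \<partial>lborel) = ennreal (k * (- (a powr (p + 1)) / (p + 1)))"
  using assms
  by (intro nn_integral_has_integral_lebesgue' has_integral_mult_right has_integral_powr_to_inf) auto

lemma set_nn_integral_powr_mult_le:
  fixes g :: "real \<Rightarrow> ennreal" and \<beta> z :: real
  assumes [measurable]: "g \<in> borel_measurable borel"
    and "0 < \<beta>" "0 < z"
  shows "(\<integral>\<^sup>+ y\<in>{z<..}. ennreal (y powr \<beta>) * g y \<partial>lborel)
           \<le> ennreal (z powr \<beta>) * (\<integral>\<^sup>+ y\<in>{z<..}. g y \<partial>lborel)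
             + (\<integral>\<^sup>+ t\<in>{z..}. ennreal (\<beta> * t powr (\<beta> - 1)) * (\<integral>\<^sup>+ y\<in>{t<..}. g y \<partial>lborel) \<partial>lborel)"
proof -
  define h where "h t y = ennreal (\<beta> * t powr (\<beta> - 1)) * indicator {z..} t * indicator {t..} y * g y"
    for t y
  have h_measurable: "case_prod h \<in> borel_measurable (lborel \<Otimes>\<^sub>M lborel)"
    unfolding h_def indicator_def atLeast_iff by measurable
  have layer_cake: "ennreal (y powr \<beta>) * g y * indicator {z<..} y
      \<le> ennreal (z powr \<beta>) * (g y * indicator {z<..} y) + (\<integral>\<^sup>+ t. h t y \<partial>lborel)" for y
  proof (cases "z < y")
    case True
    have "(\<integral>\<^sup>+ t. h t y \<partial>lborel) = (\<integral>\<^sup>+ t\<in>{z..y}. ennreal (\<beta> * t powr (\<beta> - 1)) \<partial>lborel) * g y"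
      unfolding h_def
      by (subst nn_integral_multc[symmetric]) (auto intro!: nn_integral_cong split: split_indicator)
    also have "\<dots> = ennreal (y powr \<beta> - z powr \<beta>) * g y"
      using True assms by (simp add: set_nn_integral_powr_derivative_Icc)
    finally have "(\<integral>\<^sup>+ t. h t y \<partial>lborel) = ennreal (y powr \<beta> - z powr \<beta>) * g y" .
    moreover have "ennreal (y powr \<beta>) = ennreal (z powr \<beta>) + ennreal (y powr \<beta> - z powr \<beta>)"
      using True assms by (simp add: powr_mono2 flip: ennreal_plus)
    ultimately show ?thesis
      using True by (simp add: distrib_left mult_ac)
  qed simp
  have inner_eq: "(\<integral>\<^sup>+ y. h t y \<partial>lborel)
      = ennreal (\<beta> * t powr (\<beta> - 1)) * (\<integral>\<^sup>+ y\<in>{t<..}. g y \<partial>lborel) * indicator {z..} t" for t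
  proof (cases "z \<le> t")
    case True
    have "(\<integral>\<^sup>+ y. h t y \<partial>lborel) = ennreal (\<beta> * t powr (\<beta> - 1)) * (\<integral>\<^sup>+ y\<in>{t..}. g y \<partial>lborel)"
      unfolding h_def using True
      by (subst nn_integral_cmult[symmetric]) (auto intro!: nn_integral_cong simp: mult_ac)
    also have "(\<integral>\<^sup>+ y\<in>{t..}. g y \<partial>lborel) = (\<integral>\<^sup>+ y\<in>{t<..}. g y \<partial>lborel)"
      by (rule nn_integral_cong_AE)
        (use AE_lborel_singleton[of t] in \<open>auto split: split_indicator\<close>)
    finally show ?thesis using True by simp
  qed (simp add: h_def)
  have "(\<integral>\<^sup>+ y\<in>{z<..}. ennreal (y powr \<beta>) * g y \<partial>lborel)
      \<le> (\<integral>\<^sup>+ y. ennreal (z powr \<beta>) * (g y * indicator {z<..} y) + (\<integral>\<^sup>+ t. h t y \<partial>lborel) \<partial>lborel)"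
    by (intro nn_integral_mono layer_cake)
  also have "\<dots> = ennreal (z powr \<beta>) * (\<integral>\<^sup>+ y\<in>{z<..}. g y \<partial>lborel) + (\<integral>\<^sup>+ t. \<integral>\<^sup>+ y. h t y \<partial>lborel \<partial>lborel)"
    using h_measurable lborel_pair.Fubini'[OF h_measurable]
    by (subst nn_integral_add) (auto intro!: nn_integral_cmult)
  finally show ?thesis
    by (simp add: inner_eq)
qed

lemma set_nn_integral_powr_mult_le_of_tail_le:
  fixes g :: "real \<Rightarrow> ennreal" and D :: ennreal and \<beta> \<gamma> z :: real
  assumes "g \<in> borel_measurable borel"
    and tail: "\<And>t. 0 < t \<Longrightarrow> (\<integral>\<^sup>+ y\<in>{t<..}. g y \<partial>lborel) \<le> D * ennreal (t powr - \<gamma>)"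
    and "0 < \<beta>" "\<beta> < \<gamma>" "0 < z"
  shows "(\<integral>\<^sup>+ y\<in>{z<..}. ennreal (y powr \<beta>) * g y \<partial>lborel)
           \<le> D * ennreal (\<gamma> / (\<gamma> - \<beta>) * z powr (\<beta> - \<gamma>))"
proof -
  have tail_weighted: "ennreal (\<beta> * t powr (\<beta> - 1)) * (\<integral>\<^sup>+ y\<in>{t<..}. g y \<partial>lborel) * indicator {z..} t
      \<le> D * (ennreal (\<beta> * t powr (\<beta> - 1 - \<gamma>)) * indicator {z..} t)" for t
  proof (cases "z \<le> t")
    case True
    then have "0 < t" using assms by simp
    have "ennreal (\<beta> * t powr (\<beta> - 1)) * (\<integral>\<^sup>+ y\<in>{t<..}. g y \<partial>lborel)
        \<le> ennreal (\<beta> * t powr (\<beta> - 1)) * (D * ennreal (t powr - \<gamma>))"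
      by (intro mult_left_mono tail \<open>0 < t\<close>) simp
    also have "\<dots> = D * ennreal (\<beta> * t powr (\<beta> - 1 - \<gamma>))"
      using \<open>0 < t\<close> assms by (simp add: mult.assoc mult.left_commute flip: ennreal_mult'' powr_add)
    finally show ?thesis using True by simp
  qed simp
  have "(\<integral>\<^sup>+ y\<in>{z<..}. ennreal (y powr \<beta>) * g y \<partial>lborel)
      \<le> ennreal (z powr \<beta>) * (\<integral>\<^sup>+ y\<in>{z<..}. g y \<partial>lborel)
        + (\<integral>\<^sup>+ t\<in>{z..}. ennreal (\<beta> * t powr (\<beta> - 1)) * (\<integral>\<^sup>+ y\<in>{t<..}. g y \<partial>lborel) \<partial>lborel)"
    using assms by (intro set_nn_integral_powr_mult_le)
  also have "\<dots> \<le> ennreal (z powr \<beta>) * (D * ennreal (z powr - \<gamma>))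
      + D * (\<integral>\<^sup>+ t\<in>{z..}. ennreal (\<beta> * t powr (\<beta> - 1 - \<gamma>)) \<partial>lborel)"
    using assms tail_weighted
    by (intro add_mono mult_left_mono tail) (auto intro!: nn_integral_mono simp flip: nn_integral_cmult)
  also have "(\<integral>\<^sup>+ t\<in>{z..}. ennreal (\<beta> * t powr (\<beta> - 1 - \<gamma>)) \<partial>lborel) = ennreal (\<beta> / (\<gamma> - \<beta>) * z powr (\<beta> - \<gamma>))"
    using assms by (subst set_nn_integral_powr_Ici) (auto simp: field_simps)
  also have "ennreal (z powr \<beta>) * (D * ennreal (z powr - \<gamma>)) = D * ennreal (z powr (\<beta> - \<gamma>))"
    by (simp add: mult.left_commute flip: ennreal_mult'' powr_add)
  also have "D * ennreal (z powr (\<beta> - \<gamma>)) + D * ennreal (\<beta> / (\<gamma> - \<beta>) * z powr (\<beta> - \<gamma>))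
      = D * ennreal (z powr (\<beta> - \<gamma>) + \<beta> / (\<gamma> - \<beta>) * z powr (\<beta> - \<gamma>))"
    using assms by (subst ennreal_plus) (auto simp: distrib_left)
  also have "z powr (\<beta> - \<gamma>) + \<beta> / (\<gamma> - \<beta>) * z powr (\<beta> - \<gamma>) = \<gamma> / (\<gamma> - \<beta>) * z powr (\<beta> - \<gamma>)"
    using assms by (simp add: field_simps)
  finally show ?thesis .
qed

lemma divide_ennreal_le_mult_ennreal:
  fixes a D :: ennreal and c d :: real
  assumes "a \<le> D * ennreal c" "0 \<le> c" "0 < d"
  shows "a / ennreal d \<le> D * ennreal (c / d)"
proof -
  have "a / ennreal d \<le> D * ennreal c / ennreal d"
    using assms(1) by (rule divide_right_mono_ennreal)
  also have "\<dots> = D * ennreal (c / d)"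
    using assms(2,3) by (simp add: divide_ennreal flip: ennreal_times_divide)
  finally show ?thesis .
qed

lemma tail_integral_le_delta_plus:
  fixes \<alpha> t :: real and \<sigma> :: "real \<Rightarrow> real"
  assumes "0 < t"
  shows "(\<integral>\<^sup>+ y\<in>{t<..}. ennreal (\<sigma> y powr - \<alpha>) \<partial>lborel) \<le> delta_plus \<alpha> \<sigma> * ennreal (t powr (1 - \<alpha>))"
proof -
  let ?S = "\<integral>\<^sup>+ y\<in>{t<..}. ennreal (\<sigma> y powr - \<alpha>) \<partial>lborel"
  have "ennreal (t powr (\<alpha> - 1)) * ?S \<le> delta_plus \<alpha> \<sigma>"
    unfolding delta_plus_def using assms by (intro SUP_upper) auto
  then have "ennreal (t powr (1 - \<alpha>)) * (ennreal (t powr (\<alpha> - 1)) * ?S) \<le> ennreal (t powr (1 - \<alpha>)) * delta_plus \<alpha> \<sigma>"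
    by (rule mult_left_mono) simp
  moreover have "ennreal (t powr (1 - \<alpha>)) * ennreal (t powr (\<alpha> - 1)) = 1"
    using assms by (simp flip: ennreal_mult powr_add)
  ultimately show ?thesis
    by (simp add: mult.commute flip: mult.assoc)
qed

lemma weighted_tail_integral_le_delta_plus:
  fixes \<alpha> z :: real and \<sigma> :: "real \<Rightarrow> real"
  assumes "1 < \<alpha>" "\<sigma> \<in> borel_measurable borel" "0 < z"
  shows "(\<integral>\<^sup>+ y\<in>{z<..}. ennreal (y powr ((\<alpha> - 1) / 2) * \<sigma> y powr - \<alpha>) \<partial>lborel)
           \<le> delta_plus \<alpha> \<sigma> * ennreal (2 * z powr - ((\<alpha> - 1) / 2))"
proof -
  have "(\<integral>\<^sup>+ y\<in>{z<..}. ennreal (y powr ((\<alpha> - 1) / 2)) * ennreal (\<sigma> y powr - \<alpha>) \<partial>lborel)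
      \<le> delta_plus \<alpha> \<sigma> * ennreal ((\<alpha> - 1) / ((\<alpha> - 1) - (\<alpha> - 1) / 2) * z powr ((\<alpha> - 1) / 2 - (\<alpha> - 1)))"
  proof (rule set_nn_integral_powr_mult_le_of_tail_le)
    show "(\<lambda>y. ennreal (\<sigma> y powr - \<alpha>)) \<in> borel_measurable borel"
      using assms(2) by measurable
    show "(\<integral>\<^sup>+ y\<in>{t<..}. ennreal (\<sigma> y powr - \<alpha>) \<partial>lborel) \<le> delta_plus \<alpha> \<sigma> * ennreal (t powr - (\<alpha> - 1))"
      if "0 < t" for t
      using tail_integral_le_delta_plus[OF that] by simp
  qed (use assms in auto)
  moreover have "(\<alpha> - 1) / ((\<alpha> - 1) - (\<alpha> - 1) / 2) = 2" "(\<alpha> - 1) / 2 - (\<alpha> - 1) = - ((\<alpha> - 1) / 2)"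
    using assms(1) by (auto simp: field_simps)
  ultimately show ?thesis
    by (simp add: ennreal_mult')
qed

lemma II_plus_numerator_powr_half_le_delta_plus:
  fixes \<alpha> x :: real and \<sigma> :: "real \<Rightarrow> real"
  assumes "1 < \<alpha>" "\<sigma> \<in> borel_measurable borel" "0 < x"
  shows "(\<integral>\<^sup>+ z\<in>{0<..<x}. ennreal (z powr (\<alpha> - 2)) *
            (\<integral>\<^sup>+ y\<in>{z<..}. ennreal (y powr ((\<alpha> - 1) / 2) * \<sigma> y powr - \<alpha>) \<partial>lborel) \<partial>lborel)
           \<le> delta_plus \<alpha> \<sigma> * ennreal (4 / (\<alpha> - 1) * x powr ((\<alpha> - 1) / 2))"
proof -
  define \<beta> where "\<beta> = (\<alpha> - 1) / 2"
  define D where "D = delta_plus \<alpha> \<sigma>"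
  have "0 < \<beta>" "\<alpha> - 2 + - \<beta> = \<beta> - 1" using assms(1) by (auto simp: \<beta>_def field_simps)
  have pointwise_le: "ennreal (z powr (\<alpha> - 2)) * (\<integral>\<^sup>+ y\<in>{z<..}. ennreal (y powr \<beta> * \<sigma> y powr - \<alpha>) \<partial>lborel)
      * indicator {0<..<x} z \<le> D * ennreal (2 * z powr (\<beta> - 1)) * indicator {0..x} z" for z
  proof (cases "0 < z \<and> z < x")
    case True
    have "ennreal (z powr (\<alpha> - 2)) * (\<integral>\<^sup>+ y\<in>{z<..}. ennreal (y powr \<beta> * \<sigma> y powr - \<alpha>) \<partial>lborel)
        \<le> ennreal (z powr (\<alpha> - 2)) * (D * ennreal (2 * z powr - \<beta>))"
      using True assms unfolding D_def \<beta>_def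
      by (intro mult_left_mono weighted_tail_integral_le_delta_plus) auto
    also have "\<dots> = D * ennreal (2 * z powr (\<beta> - 1))"
      using True \<open>\<alpha> - 2 + - \<beta> = \<beta> - 1\<close>
      by (simp add: mult.left_commute flip: ennreal_mult'' powr_add)
    finally show ?thesis using True by simp
  qed simp
  have "(\<integral>\<^sup>+ z\<in>{0<..<x}. ennreal (z powr (\<alpha> - 2)) *
          (\<integral>\<^sup>+ y\<in>{z<..}. ennreal (y powr \<beta> * \<sigma> y powr - \<alpha>) \<partial>lborel) \<partial>lborel)
      \<le> D * (\<integral>\<^sup>+ z\<in>{0..x}. ennreal (2 * z powr (\<beta> - 1)) \<partial>lborel)"
    using pointwise_le by (simp add: nn_integral_mono mult.assoc flip: nn_integral_cmult)
  also have "\<dots> = D * ennreal (4 / (\<alpha> - 1) * x powr \<beta>)"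
    using \<open>0 < \<beta>\<close> assms(3) by (simp add: set_nn_integral_powr_Icc_0) (simp add: \<beta>_def)
  finally show ?thesis by (simp add: D_def \<beta>_def)
qed

theorem lemma3p4:
  fixes \<alpha> :: real and \<sigma> :: "real \<Rightarrow> real" and x :: real
  assumes "1 < \<alpha>" "\<alpha> < 2"
    and "continuous_on UNIV \<sigma>" "\<And>y. \<sigma> y > 0"
    and "delta_plus \<alpha> \<sigma> < \<infinity>"
    and "x > 0"
  shows "II_plus \<alpha> \<sigma> (\<lambda>y. y powr ((\<alpha> - 1) / 2)) x
           \<le> ennreal (4 / (Gamma (\<alpha> / 2) ^ 2 * (\<alpha> - 1))) * delta_plus \<alpha> \<sigma>"
proof -
  \<comment> \<open>Continuity only provides measurability.\<close>
  have "\<sigma> \<in> borel_measurable borel"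
    using assms(3) by (rule borel_measurable_continuous_onI)
  have "0 < Gamma (\<alpha> / 2) ^ 2 * x powr ((\<alpha> - 1) / 2)"
    using assms(1,6) by (intro mult_pos_pos zero_less_power Gamma_real_pos) auto
  have "II_plus \<alpha> \<sigma> (\<lambda>y. y powr ((\<alpha> - 1) / 2)) x
      \<le> delta_plus \<alpha> \<sigma> * ennreal (4 / (\<alpha> - 1) * x powr ((\<alpha> - 1) / 2) / (Gamma (\<alpha> / 2) ^ 2 * x powr ((\<alpha> - 1) / 2)))"
    unfolding II_plus_def using assms(1,6) \<open>0 < Gamma (\<alpha> / 2) ^ 2 * x powr ((\<alpha> - 1) / 2)\<close>
      \<open>\<sigma> \<in> borel_measurable borel\<close>
    by (intro divide_ennreal_le_mult_ennreal II_plus_numerator_powr_half_le_delta_plus) auto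
  also have "4 / (\<alpha> - 1) * x powr ((\<alpha> - 1) / 2) / (Gamma (\<alpha> / 2) ^ 2 * x powr ((\<alpha> - 1) / 2))
      = 4 / (Gamma (\<alpha> / 2) ^ 2 * (\<alpha> - 1))"
    using assms(6) by simp
  finally show ?thesis
    by (simp add: mult.commute)
qed

end
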